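(* Let $(\Lambda,d)$ be a finitely aligned $k$-graph. The family of sets $\{D_F,\ X_\Lambda\setminus D_F : F\in S_\Lambda\}$ is a subbasis for a Hausdorff topology on $X_\Lambda$.
   Context: A $k$-graph $(\Lambda,d)$ is a countable small category $\Lambda$ (objects identified with identity morphisms) with a functor $d:\Lambda\to\mathbb N^k$ satisfying unique factorization: whenever $d(\lambda)=m+n$ there are unique $\mu,\nu$ with $d(\mu)=m$, $d(\nu)=n$, $\lambda=\mu\nu$. $\Lambda^0=d^{-1}(0)$, $r,s$ range/source. $\Lambda^{\min}(\lambda,\mu)=\{(\alpha,\beta):\lambda\alpha=\mu\beta,\ d(\lambda\alpha)=d(\lambda)\vee d(\mu)\}$; finitely aligned means all are finite. $S_\Lambda$ is the set of finite $F\subseteq\{(\lambda,\mu)\in\Lambda\times\Lambda:s(\lambda)=s(\mu)\}$ such that distinct $(\lambda,\mu),(\nu,\omega)\in F$ satisfy $\Lambda^{\min}(\lambda,\nu)=\Lambda^{\min}(\mu,\omega)=\emptyset$. For $m\in(\mathbb N\cup\{\infty\})^k$, $\Omega_{k,m}$ is the $k$-graph with objects $\{p\in\mathbb N^k:p\le m\}$, morphisms $(p,q)$ with $p\le q\le m$, $r(p,q)=p$, $s(p,q)=q$, $d(p,q)=q-p$. $X_\Lambda$ is the set of all functors $x:\Omega_{k,m}\to\Lambda$ (any $m$) with $d(x(p,q))=q-p$; $d(x)=m$, $r(x)=x(0,0)$. For $F\in S_\Lambda$, $D_F=\{x\in X_\Lambda:\text{there is }(\lambda,\mu)\in F\text{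 with }d(\mu)\le d(x),\ x(0,d(\mu))=\mu\}$. *)

theory Defs
  imports "HOL-Analysis.Analysis" "HOL-Library.Extended_Nat"
begin

text \<open>The index set {1..k} of the coordinates of N^k is rendered as a
  finite type 'k, so degrees are functions 'k => nat (pointwise order, sum, sup).
  The small category is given by its set of morphisms (objects are identified
  with identity morphisms), range, source, composition (comp mu nu = mu nu,
  defined when src mu = rng nu) and degree functor.\<close>

record ('a, 'k) kgraph =
  Mor  :: "'a set"
  rng  :: "'a \<Rightarrow> 'a"
  src  :: "'a \<Rightarrow> 'a"
  comp :: "'a \<Rightarrow> 'a \<Rightarrow> 'a"
  deg  :: "'a \<Rightarrow> ('k \<Rightarrow> nat)"

definition Obj :: "('a, 'k) kgraph \<Rightarrow> 'a set" where
  "Obj L = {v \<in> Mor L. deg L v = (\<lambda>i. 0)}"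

definition is_kgraph :: "('a, 'k::finite) kgraph \<Rightarrow> bool" where
  "is_kgraph L \<longleftrightarrow>
     countable (Mor L)
   \<and> (\<forall>l\<in>Mor L. rng L l \<in> Obj L \<and> src L l \<in> Obj L)
   \<and> (\<forall>v\<in>Obj L. rng L v = v \<and> src L v = v)
   \<and> (\<forall>m\<in>Mor L. \<forall>n\<in>Mor L. src L m = rng L n \<longrightarrow>
        comp L m n \<in> Mor L \<and> rng L (comp L m n) = rng L m \<and> src L (comp L m n) = src L n
        \<and> deg L (comp L m n) = (\<lambda>i. deg L m i + deg L n i))
   \<and> (\<forall>l\<in>Mor L. comp L (rng L l) l = l \<and> comp L l (src L l) = l)
   \<and> (\<forall>a\<in>Mor L. \<forall>b\<in>Mor L. \<forall>c\<in>Mor L. src L a = rng L b \<longrightarrow> src L b = rng L c \<longrightarrow>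
        comp L (comp L a b) c = comp L a (comp L b c))
   \<and> (\<forall>l\<in>Mor L. \<forall>m n. deg L l = (\<lambda>i. m i + n i) \<longrightarrow>
        (\<exists>!(mu, nu). mu \<in> Mor L \<and> nu \<in> Mor L \<and> src L mu = rng L nu
                     \<and> deg L mu = m \<and> deg L nu = n \<and> comp L mu nu = l))"

definition Lmin :: "('a, 'k) kgraph \<Rightarrow> 'a \<Rightarrow> 'a \<Rightarrow> ('a \<times> 'a) set" where
  "Lmin L l m = {(a, b). a \<in> Mor L \<and> b \<in> Mor L \<and> src L l = rng L a \<and> src L m = rng L b
       \<and> comp L l a = comp L m b \<and> deg L (comp L l a) = (\<lambda>i. max (deg L l i) (deg L m i))}"

definition finitely_aligned :: "('a, 'k) kgraph \<Rightarrow> bool" where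
  "finitely_aligned L \<longleftrightarrow> (\<forall>l\<in>Mor L. \<forall>m\<in>Mor L. finite (Lmin L l m))"

definition S_set :: "('a, 'k) kgraph \<Rightarrow> ('a \<times> 'a) set set" where
  "S_set L = {F. finite F \<and> F \<subseteq> {(l, m). l \<in> Mor L \<and> m \<in> Mor L \<and> src L l = src L m}
     \<and> (\<forall>(l, m)\<in>F. \<forall>(n, w)\<in>F. (l, m) \<noteq> (n, w) \<longrightarrow> Lmin L l n = {} \<and> Lmin L m w = {})}"

text \<open>Paths. m :: 'k => enat is an element of (N \<union> {\<infinity>})^k; a path of degree m is
  represented by the pair (m, x) where x maps each morphism (p,q) of Omega_{k,m}
  ((\<forall>i. p i \<le> q i) \<le> m) to Lambda, and is undefined elsewhere (extensionality).\<close>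
definition le_ext :: "('k \<Rightarrow> nat) \<Rightarrow> ('k \<Rightarrow> enat) \<Rightarrow> bool" where
  "le_ext p m \<longleftrightarrow> (\<forall>i. enat (p i) \<le> m i)"

definition is_path :: "('a, 'k) kgraph \<Rightarrow> ('k \<Rightarrow> enat) \<Rightarrow>
    (('k \<Rightarrow> nat) \<times> ('k \<Rightarrow> nat) \<Rightarrow> 'a) \<Rightarrow> bool" where
  "is_path L m x \<longleftrightarrow>
     (\<forall>p q. \<not> ((\<forall>i. p i \<le> q i) \<and> le_ext q m) \<longrightarrow> x (p, q) = undefined)
   \<and> (\<forall>p q. (\<forall>i. p i \<le> q i) \<and> le_ext q m \<longrightarrow>
        x (p, q) \<in> Mor L \<and> deg L (x (p, q)) = (\<lambda>i. q i - p i)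
        \<and> rng L (x (p, q)) = x (p, p) \<and> src L (x (p, q)) = x (q, q))
   \<and> (\<forall>p q r. (\<forall>i. p i \<le> q i) \<and> (\<forall>i. q i \<le> r i) \<and> le_ext r m \<longrightarrow> x (p, r) = comp L (x (p, q)) (x (q, r)))"

definition X_set :: "('a, 'k) kgraph \<Rightarrow>
    (('k \<Rightarrow> enat) \<times> (('k \<Rightarrow> nat) \<times> ('k \<Rightarrow> nat) \<Rightarrow> 'a)) set" where
  "X_set L = {(m, x). is_path L m x}"

definition D_set :: "('a, 'k) kgraph \<Rightarrow> ('a \<times> 'a) set \<Rightarrow>
    (('k \<Rightarrow> enat) \<times> (('k \<Rightarrow> nat) \<times> ('k \<Rightarrow> nat) \<Rightarrow> 'a)) set" where
  "D_set L F = {(m, x) \<in> X_set L. \<exists>(l, mu)\<in>F. le_ext (deg L mu) m \<and> x ((\<lambda>i. 0), deg L mu) = mu}"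

end

theory Submission
  imports Defs
begin

text \<open>Every set of the family is a subset of \<open>X\<^sub>\<Lambda>\<close>, and \<open>X\<^sub>\<Lambda> \<setminus> D\<^sub>\<emptyset> = X\<^sub>\<Lambda>\<close> belongs
  to it, so the generated topology lives on \<open>X\<^sub>\<Lambda>\<close>. For the Hausdorff property it suffices
  to separate two distinct paths by a cylinder set \<open>Z(\<mu>) = D\<^bsub>{(\<mu>,\<mu>)}\<^esub>\<close>, since \<open>Z(\<mu>)\<close> and
  its complement are disjoint open sets. If \<open>d(x)\<^sub>i < d(y)\<^sub>i\<close>, then \<open>\<mu> = y(0, (d(x)\<^sub>i + 1) e\<^sub>i)\<close>
  lies on \<open>y\<close> but is too long for \<open>x\<close>. If \<open>d(x) = d(y)\<close> and \<open>x(p,q) \<noteq> y(p,q)\<close>, then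
  unique factorisation of \<open>x(0,q) = x(0,p) x(p,q)\<close> forces \<open>x(0,q) \<noteq> y(0,q)\<close>, so
  \<open>\<mu> = x(0,q)\<close> works.\<close>

lemma Hausdorff_space_if_separated_by_clopen:
  assumes "\<And>u v. u \<in> topspace T \<Longrightarrow> v \<in> topspace T \<Longrightarrow> u \<noteq> v \<Longrightarrow>
             \<exists>U. openin T U \<and> openin T (topspace T - U) \<and> (u \<in> U \<longleftrightarrow> v \<notin> U)"
  shows "Hausdorff_space T"
  unfolding Hausdorff_space_def
proof (intro allI impI)
  fix u v assume uv: "u \<in> topspace T \<and> v \<in> topspace T \<and> u \<noteq> v"
  then obtain U where U: "openin T U" "openin T (topspace T - U)" "u \<in> U \<longleftrightarrow> v \<notin> U"
    using assms by blast
  show "\<exists>U V. openin T U \<and> openin T V \<and> u \<in> U \<and> v \<in> V \<and> disjnt U V"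
  proof (cases "u \<in> U")
    case True
    then show ?thesis using U uv by (intro exI[of _ U] exI[of _ "topspace T - U"]) (auto simp: disjnt_def)
  next
    case False
    then show ?thesis using U uv by (intro exI[of _ "topspace T - U"] exI[of _ U]) (auto simp: disjnt_def)
  qed
qed

lemma kgraph_comp:
  assumes "is_kgraph L" "mu \<in> Mor L" "nu \<in> Mor L" "src L mu = rng L nu"
  shows "comp L mu nu \<in> Mor L \<and> deg L (comp L mu nu) = (\<lambda>i. deg L mu i + deg L nu i)"
proof -
  have "\<forall>m\<in>Mor L. \<forall>n\<in>Mor L. src L m = rng L n \<longrightarrow>
        comp L m n \<in> Mor L \<and> rng L (comp L m n) = rng L m \<and> src L (comp L m n) = src L n
        \<and> deg L (comp L m n) = (\<lambda>i. deg L m i + deg L n i)"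
    using assms(1) unfolding is_kgraph_def by (elim conjE)
  then show ?thesis using assms(2-4) by blast
qed

lemma kgraph_factorisation_unique:
  assumes "is_kgraph L"
    and "mu \<in> Mor L" "nu \<in> Mor L" "src L mu = rng L nu"
    and "mu' \<in> Mor L" "nu' \<in> Mor L" "src L mu' = rng L nu'"
    and "deg L mu' = deg L mu" "deg L nu' = deg L nu" "comp L mu' nu' = comp L mu nu"
  shows "mu' = mu \<and> nu' = nu"
proof -
  define P where "P = (\<lambda>(a, b). a \<in> Mor L \<and> b \<in> Mor L \<and> src L a = rng L b
               \<and> deg L a = deg L mu \<and> deg L b = deg L nu \<and> comp L a b = comp L mu nu)"
  have "\<forall>l\<in>Mor L. \<forall>m n. deg L l = (\<lambda>i. m i + n i) \<longrightarrow>
        (\<exists>!(a, b). a \<in> Mor L \<and> b \<in> Mor L \<and> src L a = rng L b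
                     \<and> deg L a = m \<and> deg L b = n \<and> comp L a b = l)"
    using assms(1) unfolding is_kgraph_def by (elim conjE)
  then have "\<exists>!t. P t"
    using kgraph_comp[OF assms(1-4)] unfolding P_def by blast
  moreover have "P (mu, nu)" "P (mu', nu')"
    using assms unfolding P_def by auto
  ultimately have "(mu', nu') = (mu, nu)"
    by (metis the1_equality)
  then show ?thesis by simp
qed
lemma is_path_undefined:
  "is_path L m x \<Longrightarrow> \<not> ((\<forall>i. p i \<le> q i) \<and> le_ext q m) \<Longrightarrow> x (p, q) = undefined"
  unfolding is_path_def by blast

lemma is_path_Mor:
  assumes "is_path L m x" "\<forall>i. p i \<le> q i" "le_ext q m"
  shows "x (p, q) \<in> Mor L \<and> deg L (x (p, q)) = (\<lambda>i. q i - p i)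
        \<and> rng L (x (p, q)) = x (p, p) \<and> src L (x (p, q)) = x (q, q)"
  using assms unfolding is_path_def by blast

lemma is_path_comp:
  assumes "is_path L m x" "\<forall>i. p i \<le> q i" "\<forall>i. q i \<le> r i" "le_ext r m"
  shows "x (p, r) = comp L (x (p, q)) (x (q, r))"
  using assms unfolding is_path_def by blast

lemma is_path_initial_segment:
  assumes "is_path L m x" "le_ext q m"
  shows "x ((\<lambda>i. 0), q) \<in> Mor L \<and> deg L (x ((\<lambda>i. 0), q)) = q"
  using is_path_Mor[OF assms(1) _ assms(2), of "\<lambda>i. 0"] by simp

lemma le_ext_trans: "\<forall>i. p i \<le> q i \<Longrightarrow> le_ext q m \<Longrightarrow> le_ext p m"
  unfolding le_ext_def by (meson enat_ord_simps(1) order_trans)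

lemma path_segment_eq_if_initial_segment_eq:
  assumes "is_kgraph L" "is_path L m x" "is_path L m y"
    and pq: "\<forall>i. p i \<le> q i" "le_ext q m"
    and "x ((\<lambda>i. 0), q) = y ((\<lambda>i. 0), q)"
  shows "x (p, q) = y (p, q)"
proof -
  let ?z = "\<lambda>i. 0::nat"
  have p: "le_ext p m" using le_ext_trans pq by blast
  have "x (?z, q) = comp L (x (?z, p)) (x (p, q))" "y (?z, q) = comp L (y (?z, p)) (y (p, q))"
    using is_path_comp[OF assms(2), of ?z p q] is_path_comp[OF assms(3), of ?z p q] pq by auto
  then have "comp L (x (?z, p)) (x (p, q)) = comp L (y (?z, p)) (y (p, q))"
    using assms(6) by simp
  moreover have "x (?z, p) \<in> Mor L" "deg L (x (?z, p)) = p" "src L (x (?z, p)) = x (p, p)"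
      "y (?z, p) \<in> Mor L" "deg L (y (?z, p)) = p" "src L (y (?z, p)) = y (p, p)"
    using is_path_Mor[OF assms(2) _ p] is_path_Mor[OF assms(3) _ p] by auto
  moreover have "x (p, q) \<in> Mor L" "deg L (x (p, q)) = (\<lambda>i. q i - p i)" "rng L (x (p, q)) = x (p, p)"
      "y (p, q) \<in> Mor L" "deg L (y (p, q)) = (\<lambda>i. q i - p i)" "rng L (y (p, q)) = y (p, p)"
    using is_path_Mor[OF assms(2) pq] is_path_Mor[OF assms(3) pq] by auto
  ultimately have "x (?z, p) = y (?z, p) \<and> x (p, q) = y (p, q)"
    by (intro kgraph_factorisation_unique[OF assms(1)]) simp_all
  then show ?thesis ..
qed

lemma singleton_in_S_set: "mu \<in> Mor L \<Longrightarrow> {(mu, mu)} \<in> S_set L"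
  by (simp add: S_set_def)

lemma mem_D_set_singleton:
  "(m, x) \<in> D_set L {(mu, mu)} \<longleftrightarrow>
   (m, x) \<in> X_set L \<and> le_ext (deg L mu) m \<and> x ((\<lambda>i. 0), deg L mu) = mu"
  by (simp add: D_set_def)

lemma cylinder_separates_paths_of_different_degree:
  assumes "is_path L m x" "is_path L m' x'" and lt: "m i < m' i"
  shows "\<exists>mu\<in>Mor L. (m', x') \<in> D_set L {(mu, mu)} \<and> (m, x) \<notin> D_set L {(mu, mu)}"
proof -
  obtain n where n: "m i = enat n" using lt by (cases "m i") auto
  define p where "p = (\<lambda>j. if j = i then Suc n else 0)"
  have p_m': "le_ext p m'" unfolding le_ext_def p_def
    using lt n by (auto simp: Suc_ile_eq simp flip: zero_enat_def)
  have p_m: "\<not> le_ext p m" unfolding le_ext_def p_def using n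
    by (metis Suc_n_not_le_n enat_ord_simps(1))
  have "x' ((\<lambda>i. 0), p) \<in> Mor L" "deg L (x' ((\<lambda>i. 0), p)) = p"
    using is_path_initial_segment[OF assms(2) p_m'] by auto
  then show ?thesis
    using p_m' p_m assms(1,2) by (intro bexI[of _ "x' ((\<lambda>i. 0), p)"]) (auto simp: mem_D_set_singleton X_set_def)
qed

lemma cylinder_separates_paths_of_same_degree:
  assumes "is_kgraph L" "is_path L m x" "is_path L m y" "x \<noteq> y"
  shows "\<exists>mu\<in>Mor L. (m, x) \<in> D_set L {(mu, mu)} \<and> (m, y) \<notin> D_set L {(mu, mu)}"
proof -
  obtain p q where pq: "x (p, q) \<noteq> y (p, q)" using assms(4) by (metis ext prod.collapse)
  then have dom: "(\<forall>i. p i \<le> q i) \<and> le_ext q m"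
    using is_path_undefined[OF assms(2)] is_path_undefined[OF assms(3)] by metis
  then have "x ((\<lambda>i. 0), q) \<noteq> y ((\<lambda>i. 0), q)"
    using path_segment_eq_if_initial_segment_eq[OF assms(1-3)] pq by blast
  moreover have "x ((\<lambda>i. 0), q) \<in> Mor L" "deg L (x ((\<lambda>i. 0), q)) = q"
    using is_path_initial_segment[OF assms(2)] dom by auto
  ultimately show ?thesis
    using dom assms(2,3) by (intro bexI[of _ "x ((\<lambda>i. 0), q)"]) (auto simp: mem_D_set_singleton X_set_def)
qed

lemma cylinder_separates_paths:
  assumes "is_kgraph L" "u \<in> X_set L" "v \<in> X_set L" "u \<noteq> v"
  shows "\<exists>mu\<in>Mor L. u \<in> D_set L {(mu, mu)} \<longleftrightarrow> v \<notin> D_set L {(mu, mu)}"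
proof -
  obtain m x m' x' where u: "u = (m, x)" and v: "v = (m', x')" by (cases u, cases v) auto
  have paths: "is_path L m x" "is_path L m' x'" using assms(2,3) u v by (auto simp: X_set_def)
  show ?thesis
  proof (cases "m = m'")
    case True
    with assms(4) u v have "x \<noteq> x'" by simp
    then obtain mu where "mu \<in> Mor L" "(m, x) \<in> D_set L {(mu, mu)}" "(m, x') \<notin> D_set L {(mu, mu)}"
      using cylinder_separates_paths_of_same_degree[OF assms(1) paths(1)] paths(2) True by blast
    then show ?thesis using u v True by (intro bexI[of _ mu]) auto
  next
    case False
    then obtain i where "m i < m' i \<or> m' i < m i" by (meson ext linorder_neqE)
    then obtain mu where "mu \<in> Mor L" "(u \<in> D_set L {(mu, mu)}) \<noteq> (v \<in> D_set L {(mu, mu)})"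
      using cylinder_separates_paths_of_different_degree[OF paths(1,2)]
        cylinder_separates_paths_of_different_degree[OF paths(2,1)] u v by metis
    then show ?thesis by (intro bexI[of _ mu]) auto
  qed
qed

theorem proposition5p4:
  fixes L :: "('a, 'k::finite) kgraph"
  assumes "is_kgraph L" and "finitely_aligned L"
  shows "topspace (topology_generated_by
            ({D_set L F | F. F \<in> S_set L} \<union> {X_set L - D_set L F | F. F \<in> S_set L}))
           = X_set L
       \<and> Hausdorff_space (topology_generated_by
            ({D_set L F | F. F \<in> S_set L} \<union> {X_set L - D_set L F | F. F \<in> S_set L}))"
proof -
  let ?S = "{D_set L F | F. F \<in> S_set L} \<union> {X_set L - D_set L F | F. F \<in> S_set L}"
  let ?T = "topology_generated_by ?S"
  have "X_set L = X_set L - D_set L {}" "{} \<in> S_set L"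
    by (simp_all add: D_set_def S_set_def)
  then have "X_set L \<in> ?S" by blast
  moreover have "\<Union>?S \<subseteq> X_set L" by (auto simp: D_set_def)
  ultimately have "\<Union>?S = X_set L" by blast
  then have topspace: "topspace ?T = X_set L" by simp
  have clopen: "openin ?T (D_set L {(mu, mu)}) \<and> openin ?T (X_set L - D_set L {(mu, mu)})"
    if "mu \<in> Mor L" for mu
    using singleton_in_S_set[OF that] by (blast intro: topology_generated_by_Basis)
  have "Hausdorff_space ?T"
  proof (rule Hausdorff_space_if_separated_by_clopen)
    fix u v assume "u \<in> topspace ?T" "v \<in> topspace ?T" "u \<noteq> v"
    then obtain mu where "mu \<in> Mor L" "u \<in> D_set L {(mu, mu)} \<longleftrightarrow> v \<notin> D_set L {(mu, mu)}"
      using cylinder_separates_paths[OF assms(1)] unfolding topspace by blast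
    then show "\<exists>U. openin ?T U \<and> openin ?T (topspace ?T - U) \<and> (u \<in> U \<longleftrightarrow> v \<notin> U)"
      using clopen unfolding topspace by blast
  qed
  with topspace show ?thesis by simp
qed

end
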